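(* Let $X$ be a non-empty set, $\sigma : X \to X$ a bijection, and $A \subseteq \mathbb{C}^X$ a subalgebra (under pointwise operations) such that $h\circ\sigma \in A$ and $h \circ \sigma^{-1} \in A$ for all $h \in A$. Let $\widetilde{\sigma} : A \to A$ be the automorphism $\widetilde{\sigma}(f) = f\circ \sigma^{-1}$. Then the unique maximal abelian subalgebra of $A \rtimes_{\widetilde{\sigma}} \mathbb{Z}$ containing $A$ (namely the commutant $A'$ of $A$) is precisely \[ A' = \Big\{ \sum_{n\in\mathbb{Z}} f_n\delta^n \in A \rtimes_{\widetilde{\sigma}}\mathbb{Z} \;:\; \text{for all } n \in \mathbb{Z},\ f_n \text{ vanishes identically on } \mathrm{Sep}_A^n(X)\Big\}. \]
   Context: For $n \in \mathbb{Z}$, $\mathrm{Sep}_A^n(X) = \{x \in X : \exists h \in A \text{ with } h(x) \neq \widetilde{\sigma}^n(h)(x)\}$ (for $n=0$ this set is empty). The crossed product $A \rtimes_{\widetilde{\sigma}} \mathbb{Z}$ is the set of finitely supported functions $f:\mathbb{Z}\to A$, written $f=\sum_n f_n\delta^n$, with pointwise addition and scalar multiplication and multiplication $(f*g)(n)=\sum_{k} f(k)\cdot\widetilde{\sigma}^k(g(n-k))$, i.e. $(f_n\delta^n)*(g_m\delta^m)=f_n\,\widetilde{\sigma}^n(g_m)\,\delta^{n+m}$. $A$ is regarded as the subalgebra $\{f_0\delta^0 : f_0 \in A\}$. *)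

theory Defs
  imports Complex_Main
begin

definition zpow :: "('x \<Rightarrow> 'x) \<Rightarrow> int \<Rightarrow> 'x \<Rightarrow> 'x" where
  "zpow \<sigma> n = (if 0 \<le> n then \<sigma> ^^ nat n else inv \<sigma> ^^ nat (- n))"

definition sigt :: "('x \<Rightarrow> 'x) \<Rightarrow> int \<Rightarrow> ('x \<Rightarrow> complex) \<Rightarrow> ('x \<Rightarrow> complex)" where
  "sigt \<sigma> n h = h \<circ> zpow \<sigma> (- n)"

definition fun_subalgebra :: "('x \<Rightarrow> complex) set \<Rightarrow> bool" where
  "fun_subalgebra A \<longleftrightarrow> (\<lambda>_. 0) \<in> A \<and>
     (\<forall>f\<in>A. \<forall>g\<in>A. (\<lambda>x. f x + g x) \<in> A) \<and>
     (\<forall>c. \<forall>f\<in>A. (\<lambda>x. c * f x) \<in> A) \<and>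
     (\<forall>f\<in>A. \<forall>g\<in>A. (\<lambda>x. f x * g x) \<in> A)"

definition Sep :: "('x \<Rightarrow> complex) set \<Rightarrow> ('x \<Rightarrow> 'x) \<Rightarrow> int \<Rightarrow> 'x set" where
  "Sep A \<sigma> n = {x. \<exists>h\<in>A. h x \<noteq> sigt \<sigma> n h x}"

text \<open>Crossed product A x_sigma-tilde Z: finitely supported functions Z -> A.\<close>
definition crossed :: "('x \<Rightarrow> complex) set \<Rightarrow> (int \<Rightarrow> 'x \<Rightarrow> complex) set" where
  "crossed A = {f. finite {n. f n \<noteq> (\<lambda>_. 0)} \<and> (\<forall>n. f n \<in> A)}"

definition cp_mult :: "('x \<Rightarrow> 'x) \<Rightarrow> (int \<Rightarrow> 'x \<Rightarrow> complex) \<Rightarrow> (int \<Rightarrow> 'x \<Rightarrow> complex)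
    \<Rightarrow> (int \<Rightarrow> 'x \<Rightarrow> complex)" where
  "cp_mult \<sigma> f g = (\<lambda>n x. \<Sum>k\<in>{k. f k \<noteq> (\<lambda>_. 0)}. f k x * sigt \<sigma> k (g (n - k)) x)"

definition embed :: "('x \<Rightarrow> complex) \<Rightarrow> (int \<Rightarrow> 'x \<Rightarrow> complex)" where
  "embed a = (\<lambda>n. if n = 0 then a else (\<lambda>_. 0))"

definition commutant :: "('x \<Rightarrow> complex) set \<Rightarrow> ('x \<Rightarrow> 'x) \<Rightarrow> (int \<Rightarrow> 'x \<Rightarrow> complex) set" where
  "commutant A \<sigma> = {f \<in> crossed A. \<forall>a\<in>A. cp_mult \<sigma> f (embed a) = cp_mult \<sigma> (embed a) f}"

definition cp_subalgebra :: "('x \<Rightarrow> complex) set \<Rightarrow> ('x \<Rightarrow> 'x) \<Rightarrow> (int \<Rightarrow> 'x \<Rightarrow> complex) set \<Rightarrow> bool" where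
  "cp_subalgebra A \<sigma> B \<longleftrightarrow> B \<subseteq> crossed A \<and> (\<lambda>_ _. 0) \<in> B \<and>
     (\<forall>f\<in>B. \<forall>g\<in>B. (\<lambda>n x. f n x + g n x) \<in> B) \<and>
     (\<forall>c. \<forall>f\<in>B. (\<lambda>n x. c * f n x) \<in> B) \<and>
     (\<forall>f\<in>B. \<forall>g\<in>B. cp_mult \<sigma> f g \<in> B)"

definition cp_commutative :: "('x \<Rightarrow> 'x) \<Rightarrow> (int \<Rightarrow> 'x \<Rightarrow> complex) set \<Rightarrow> bool" where
  "cp_commutative \<sigma> B \<longleftrightarrow> (\<forall>f\<in>B. \<forall>g\<in>B. cp_mult \<sigma> f g = cp_mult \<sigma> g f)"

end

theory Submission
  imports Defs
begin

text \<open>For \<open>a \<in> A\<close> the coefficients of the two products are \<open>(f a)\<^sub>n(x) = f\<^sub>n(x) a(\<sigma>^-n x)\<close> and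
  \<open>(a f)\<^sub>n(x) = a(x) f\<^sub>n(x)\<close>, so \<open>f\<close> commutes with \<open>A\<close> exactly when every \<open>f\<^sub>n\<close> vanishes on
  \<open>Sep\<^sup>n\<close>: the commutant is \<open>S\<close>. On \<open>S\<close> the twist is invisible: where \<open>f\<^sub>k(x) \<noteq> 0\<close>, no
  function of \<open>A\<close> separates \<open>x\<close> from \<open>\<sigma>^-k x\<close>, so the product of two elements of \<open>S\<close> is the
  ordinary convolution of their coefficient sequences and \<open>S\<close> is commutative. \<open>S\<close> is closed
  under products because non-separation is transitive along \<open>x\<close>, \<open>\<sigma>^-k x\<close>, \<open>\<sigma>^-(k+m) x\<close>.
  Every commutative subalgebra containing \<open>A\<close> lies in the commutant, hence in \<open>S\<close>.\<close>

lemma zpow_0 [simp]: "zpow \<sigma> 0 = id"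
  by (simp add: zpow_def)

lemma zpow_add1:
  assumes "bij \<sigma>"
  shows "zpow \<sigma> (n + 1) = \<sigma> \<circ> zpow \<sigma> n"
proof (cases "0 \<le> n")
  case True
  then have "nat (n + 1) = Suc (nat n)" by simp
  with True show ?thesis by (simp add: zpow_def)
next
  case False
  then obtain m where m: "nat (- n) = Suc m" "nat (- (n + 1)) = m" "0 \<le> n + 1 \<longleftrightarrow> m = 0"
    by (intro that[of "nat (- n - 1)"]) auto
  have "\<sigma> \<circ> inv \<sigma> = id"
    using assms bij_is_surj surj_iff by blast
  then have "\<sigma> \<circ> (inv \<sigma> \<circ> inv \<sigma> ^^ m) = inv \<sigma> ^^ m"
    by (simp flip: comp_assoc)
  with False m show ?thesis
    by (auto simp: zpow_def)
qed

lemma zpow_diff1: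
  assumes "bij \<sigma>"
  shows "zpow \<sigma> (n - 1) = inv \<sigma> \<circ> zpow \<sigma> n"
proof -
  have "inv \<sigma> \<circ> \<sigma> = id"
    using assms by (simp add: bij_is_inj)
  then show ?thesis
    using zpow_add1[OF assms, of "n - 1"] by (simp flip: comp_assoc)
qed

lemma zpow_add:
  assumes "bij \<sigma>"
  shows "zpow \<sigma> (m + n) = zpow \<sigma> m \<circ> zpow \<sigma> n"
proof (induction m rule: int_induct[where k = 0])
  case (step1 i)
  have "zpow \<sigma> (i + 1 + n) = \<sigma> \<circ> zpow \<sigma> (i + n)"
    using zpow_add1[OF assms, of "i + n"] by (simp add: ac_simps)
  with step1 show ?case
    by (simp add: zpow_add1[OF assms] comp_assoc)
next
  case (step2 i)
  have "zpow \<sigma> (i - 1 + n) = inv \<sigma> \<circ> zpow \<sigma> (i + n)"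
    using zpow_diff1[OF assms, of "i + n"] by (simp add: algebra_simps)
  with step2 show ?case
    by (simp add: zpow_diff1[OF assms] comp_assoc)
qed simp

lemma comp_funpow_closed:
  assumes "\<forall>h\<in>A. h \<circ> \<tau> \<in> A" "h \<in> A"
  shows "h \<circ> \<tau> ^^ n \<in> A"
proof (induction n)
  case (Suc n)
  then have "(h \<circ> \<tau> ^^ n) \<circ> \<tau> \<in> A"
    using assms(1) by blast
  then show ?case
    by (simp only: funpow_Suc_right comp_assoc)
qed (simp add: assms(2))

lemma comp_zpow_closed:
  assumes "\<forall>h\<in>A. h \<circ> \<sigma> \<in> A" "\<forall>h\<in>A. h \<circ> inv \<sigma> \<in> A" "h \<in> A"
  shows "h \<circ> zpow \<sigma> n \<in> A"
  using comp_funpow_closed[OF assms(1,3)] comp_funpow_closed[OF assms(2,3)]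
  by (simp add: zpow_def)

lemma fun_subalgebra_sum:
  assumes "fun_subalgebra A" "finite K" "\<And>k. k \<in> K \<Longrightarrow> F k \<in> A"
  shows "(\<lambda>x. \<Sum>k\<in>K. F k x) \<in> A"
  using assms(2,3)
  by (induction K rule: finite_induct) (use assms(1) in \<open>auto simp: fun_subalgebra_def\<close>)

lemma not_in_Sep_iff: "x \<notin> Sep A \<sigma> n \<longleftrightarrow> (\<forall>h\<in>A. h x = h (zpow \<sigma> (- n) x))"
  by (auto simp: Sep_def sigt_def)

lemma Sep_0 [simp]: "Sep A \<sigma> 0 = {}"
  by (simp add: Sep_def sigt_def)

lemma not_in_Sep_add:
  assumes "bij \<sigma>" "x \<notin> Sep A \<sigma> m" "zpow \<sigma> (- m) x \<notin> Sep A \<sigma> n"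
  shows "x \<notin> Sep A \<sigma> (m + n)"
proof -
  have "zpow \<sigma> (- n) (zpow \<sigma> (- m) x) = zpow \<sigma> (- (m + n)) x"
    using zpow_add[OF assms(1), of "- n" "- m"] by (simp add: add.commute)
  with assms(2,3) show ?thesis
    by (auto simp: not_in_Sep_iff)
qed

definition vanishes_on_Sep :: "('x \<Rightarrow> complex) set \<Rightarrow> ('x \<Rightarrow> 'x) \<Rightarrow> (int \<Rightarrow> 'x \<Rightarrow> complex) \<Rightarrow> bool" where
  "vanishes_on_Sep A \<sigma> f \<longleftrightarrow> (\<forall>n. \<forall>x\<in>Sep A \<sigma> n. f n x = 0)"

lemma vanishes_on_Sep_mult_sigt:
  assumes "vanishes_on_Sep A \<sigma> f" "h \<in> A"
  shows "f k x * sigt \<sigma> k h x = f k x * h x"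
  using assms by (cases "x \<in> Sep A \<sigma> k") (auto simp: vanishes_on_Sep_def Sep_def)

lemma cp_mult_eq_sum:
  assumes "finite T" "{k. f k \<noteq> (\<lambda>_. 0)} \<subseteq> T"
  shows "cp_mult \<sigma> f g n x = (\<Sum>k\<in>T. f k x * sigt \<sigma> k (g (n - k)) x)"
  unfolding cp_mult_def by (rule sum.mono_neutral_left) (use assms in auto)

lemma cp_mult_embed_left: "cp_mult \<sigma> (embed a) f n x = a x * f n x"
proof -
  have "cp_mult \<sigma> (embed a) f n x = (\<Sum>k\<in>{0}. embed a k x * sigt \<sigma> k (f (n - k)) x)"
    by (rule cp_mult_eq_sum) (auto simp: embed_def)
  then show ?thesis
    by (simp add: embed_def sigt_def)
qed

lemma cp_mult_embed_right:
  assumes "finite {k. f k \<noteq> (\<lambda>_. 0)}"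
  shows "cp_mult \<sigma> f (embed a) n x = f n x * sigt \<sigma> n a x"
proof -
  have "cp_mult \<sigma> f (embed a) n x = (\<Sum>k\<in>{n} \<union> {k. f k \<noteq> (\<lambda>_. 0)}. f k x * sigt \<sigma> k (embed a (n - k)) x)"
    by (rule cp_mult_eq_sum) (use assms in auto)
  also have "\<dots> = (\<Sum>k\<in>{n} \<union> {k. f k \<noteq> (\<lambda>_. 0)}. if k = n then f n x * sigt \<sigma> n a x else 0)"
    by (rule sum.cong) (auto simp: embed_def sigt_def)
  also have "\<dots> = f n x * sigt \<sigma> n a x"
    using assms by simp
  finally show ?thesis .
qed

lemma commutes_with_embed_iff:
  assumes "finite {k. f k \<noteq> (\<lambda>_. 0)}"
  shows "(\<forall>a\<in>A. cp_mult \<sigma> f (embed a) = cp_mult \<sigma> (embed a) f) \<longleftrightarrow> vanishes_on_Sep A \<sigma> f"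
proof -
  have "cp_mult \<sigma> f (embed a) = cp_mult \<sigma> (embed a) f \<longleftrightarrow> (\<forall>n x. f n x = 0 \<or> sigt \<sigma> n a x = a x)" for a
    by (simp add: fun_eq_iff cp_mult_embed_left cp_mult_embed_right[OF assms] mult.commute)
  then show ?thesis
    by (auto simp: vanishes_on_Sep_def Sep_def) metis+
qed

lemma commutant_eq: "commutant A \<sigma> = {f \<in> crossed A. vanishes_on_Sep A \<sigma> f}"
  using commutes_with_embed_iff by (auto simp: commutant_def crossed_def)

lemma cp_mult_eq_convolution:
  assumes "finite T" "{k. f k \<noteq> (\<lambda>_. 0)} \<subseteq> T" "vanishes_on_Sep A \<sigma> f" "\<forall>k. g k \<in> A"
  shows "cp_mult \<sigma> f g n x = (\<Sum>k\<in>T. f k x * g (n - k) x)"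
proof -
  have "cp_mult \<sigma> f g n x = (\<Sum>k\<in>T. f k x * sigt \<sigma> k (g (n - k)) x)"
    by (rule cp_mult_eq_sum[OF assms(1,2)])
  also have "\<dots> = (\<Sum>k\<in>T. f k x * g (n - k) x)"
    by (rule sum.cong[OF refl]) (use vanishes_on_Sep_mult_sigt[OF assms(3)] assms(4) in blast)
  finally show ?thesis .
qed

lemma cp_mult_commute:
  assumes "f \<in> crossed A" "g \<in> crossed A" "vanishes_on_Sep A \<sigma> f" "vanishes_on_Sep A \<sigma> g"
  shows "cp_mult \<sigma> f g = cp_mult \<sigma> g f"
proof (intro ext)
  fix n x
  define T where "T = {k. f k \<noteq> (\<lambda>_. 0)} \<union> (\<lambda>k. n - k) ` {k. g k \<noteq> (\<lambda>_. 0)}"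
  have fin: "finite T"
    using assms(1,2) by (simp add: T_def crossed_def)
  have "cp_mult \<sigma> f g n x = (\<Sum>k\<in>T. f k x * g (n - k) x)"
    by (rule cp_mult_eq_convolution) (use fin assms(2,3) in \<open>auto simp: T_def crossed_def\<close>)
  also have "\<dots> = (\<Sum>j\<in>(\<lambda>k. n - k) ` T. g j x * f (n - j) x)"
    by (subst sum.reindex) (auto simp: inj_on_def mult.commute)
  also have "\<dots> = cp_mult \<sigma> g f n x"
    by (rule cp_mult_eq_convolution [symmetric]) (use fin assms(1,4) in \<open>force simp: T_def crossed_def\<close>)+
  finally show "cp_mult \<sigma> f g n x = cp_mult \<sigma> g f n x" .
qed

lemma finite_support_cp_mult:
  assumes "finite {k. f k \<noteq> (\<lambda>_. 0)}" "finite {k. g k \<noteq> (\<lambda>_. 0)}"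
  shows "finite {n. cp_mult \<sigma> f g n \<noteq> (\<lambda>_. 0)}"
proof (rule finite_subset)
  show "{n. cp_mult \<sigma> f g n \<noteq> (\<lambda>_. 0)} \<subseteq> (\<lambda>(k, j). k + j) ` ({k. f k \<noteq> (\<lambda>_. 0)} \<times> {k. g k \<noteq> (\<lambda>_. 0)})"
  proof (rule subsetI, rule ccontr)
    fix n
    assume n: "n \<in> {n. cp_mult \<sigma> f g n \<noteq> (\<lambda>_. 0)}"
      "n \<notin> (\<lambda>(k, j). k + j) ` ({k. f k \<noteq> (\<lambda>_. 0)} \<times> {k. g k \<noteq> (\<lambda>_. 0)})"
    have "g (n - k) = (\<lambda>_. 0)" if "f k \<noteq> (\<lambda>_. 0)" for k
    proof (rule ccontr)
      assume "g (n - k) \<noteq> (\<lambda>_. 0)"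
      with that have "n \<in> (\<lambda>(k, j). k + j) ` ({k. f k \<noteq> (\<lambda>_. 0)} \<times> {k. g k \<noteq> (\<lambda>_. 0)})"
        by (intro image_eqI[of n _ "(k, n - k)"]) auto
      with n(2) show False
        by contradiction
    qed
    then have "cp_mult \<sigma> f g n = (\<lambda>_. 0)"
      by (simp add: cp_mult_def sigt_def fun_eq_iff)
    with n(1) show False
      by simp
  qed
qed (use assms in simp)

lemma crossed_cp_mult:
  assumes "fun_subalgebra A" "\<forall>h\<in>A. h \<circ> \<sigma> \<in> A" "\<forall>h\<in>A. h \<circ> inv \<sigma> \<in> A"
    and "f \<in> crossed A" "g \<in> crossed A"
  shows "cp_mult \<sigma> f g \<in> crossed A"
proof -
  have "g (n - k) \<circ> zpow \<sigma> (- k) \<in> A" for n k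
    using comp_zpow_closed[OF assms(2,3)] assms(5) by (simp add: crossed_def)
  then have "(\<lambda>x. f k x * (g (n - k) \<circ> zpow \<sigma> (- k)) x) \<in> A" for n k
    using assms(1,4) unfolding fun_subalgebra_def crossed_def by blast
  then have "(\<lambda>x. \<Sum>k\<in>{k. f k \<noteq> (\<lambda>_. 0)}. f k x * (g (n - k) \<circ> zpow \<sigma> (- k)) x) \<in> A" for n
    by (intro fun_subalgebra_sum[OF assms(1)]) (use assms(4) in \<open>simp_all add: crossed_def\<close>)
  then have "cp_mult \<sigma> f g n \<in> A" for n
    by (simp add: cp_mult_def sigt_def)
  with assms(4,5) show ?thesis
    by (simp add: crossed_def finite_support_cp_mult)
qed

lemma vanishes_on_Sep_cp_mult:
  assumes "bij \<sigma>" "vanishes_on_Sep A \<sigma> f" "vanishes_on_Sep A \<sigma> g"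
  shows "vanishes_on_Sep A \<sigma> (cp_mult \<sigma> f g)"
  unfolding vanishes_on_Sep_def
proof (intro allI ballI)
  fix n x
  assume x: "x \<in> Sep A \<sigma> n"
  have "f k x * g (n - k) (zpow \<sigma> (- k) x) = 0" for k
  proof (rule ccontr)
    assume "f k x * g (n - k) (zpow \<sigma> (- k) x) \<noteq> 0"
    then have "x \<notin> Sep A \<sigma> k" "zpow \<sigma> (- k) x \<notin> Sep A \<sigma> (n - k)"
      using assms(2,3) by (auto simp: vanishes_on_Sep_def)
    then have "x \<notin> Sep A \<sigma> (k + (n - k))"
      by (rule not_in_Sep_add[OF assms(1)])
    with x show False
      by simp
  qed
  then show "cp_mult \<sigma> f g n x = 0"
    by (auto simp: cp_mult_def sigt_def intro!: sum.neutral)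
qed

lemma cp_subalgebra_vanishing_on_Sep:
  assumes "bij \<sigma>" "fun_subalgebra A" "\<forall>h\<in>A. h \<circ> \<sigma> \<in> A" "\<forall>h\<in>A. h \<circ> inv \<sigma> \<in> A"
  shows "cp_subalgebra A \<sigma> {f \<in> crossed A. vanishes_on_Sep A \<sigma> f}"
  unfolding cp_subalgebra_def
proof (intro conjI ballI allI)
  show "(\<lambda>_ _. 0) \<in> {f \<in> crossed A. vanishes_on_Sep A \<sigma> f}"
    using assms(2) by (simp add: crossed_def vanishes_on_Sep_def fun_subalgebra_def)
next
  fix f g
  assume f: "f \<in> {f \<in> crossed A. vanishes_on_Sep A \<sigma> f}" and g: "g \<in> {f \<in> crossed A. vanishes_on_Sep A \<sigma> f}"
  have "{n. (\<lambda>x. f n x + g n x) \<noteq> (\<lambda>_. 0)} \<subseteq> {n. f n \<noteq> (\<lambda>_. 0)} \<union> {n. g n \<noteq> (\<lambda>_. 0)}"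
    by auto
  with f g assms(2) show "(\<lambda>n x. f n x + g n x) \<in> {f \<in> crossed A. vanishes_on_Sep A \<sigma> f}"
    by (auto simp: crossed_def vanishes_on_Sep_def fun_subalgebra_def intro: finite_subset)
  from f g assms show "cp_mult \<sigma> f g \<in> {f \<in> crossed A. vanishes_on_Sep A \<sigma> f}"
    by (simp add: crossed_cp_mult vanishes_on_Sep_cp_mult)
next
  fix c f
  assume f: "f \<in> {f \<in> crossed A. vanishes_on_Sep A \<sigma> f}"
  have "{n. (\<lambda>x. c * f n x) \<noteq> (\<lambda>_. 0)} \<subseteq> {n. f n \<noteq> (\<lambda>_. 0)}"
    by auto
  with f assms(2) show "(\<lambda>n x. c * f n x) \<in> {f \<in> crossed A. vanishes_on_Sep A \<sigma> f}"
    by (auto simp: crossed_def vanishes_on_Sep_def fun_subalgebra_def intro: finite_subset)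
qed auto

lemma embed_in_crossed:
  assumes "fun_subalgebra A" "a \<in> A"
  shows "embed a \<in> crossed A"
proof -
  have "{n. embed a n \<noteq> (\<lambda>_. 0)} \<subseteq> {0}"
    by (auto simp: embed_def)
  with assms show ?thesis
    by (auto simp: crossed_def embed_def fun_subalgebra_def intro: finite_subset)
qed

lemma vanishes_on_Sep_embed: "vanishes_on_Sep A \<sigma> (embed a)"
  by (simp add: vanishes_on_Sep_def embed_def)

lemma cp_commutative_subset_commutant:
  assumes "cp_subalgebra A \<sigma> B" "embed ` A \<subseteq> B" "cp_commutative \<sigma> B"
  shows "B \<subseteq> commutant A \<sigma>"
  using assms by (auto simp: commutant_def cp_subalgebra_def cp_commutative_def)

theorem theorem3p3:
  fixes \<sigma> :: "'x \<Rightarrow> 'x" and A :: "('x \<Rightarrow> complex) set"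
  assumes "bij \<sigma>"
    and "fun_subalgebra A"
    and "\<forall>h\<in>A. h \<circ> \<sigma> \<in> A"
    and "\<forall>h\<in>A. h \<circ> inv \<sigma> \<in> A"
  defines "S \<equiv> {f \<in> crossed A. \<forall>n. \<forall>x\<in>Sep A \<sigma> n. f n x = 0}"
  shows "commutant A \<sigma> = S
    \<and> cp_subalgebra A \<sigma> S \<and> embed ` A \<subseteq> S \<and> cp_commutative \<sigma> S
    \<and> (\<forall>B. cp_subalgebra A \<sigma> B \<and> embed ` A \<subseteq> B \<and> cp_commutative \<sigma> B \<longrightarrow> B \<subseteq> S)"
proof -
  have S_eq: "S = {f \<in> crossed A. vanishes_on_Sep A \<sigma> f}"
    by (simp add: S_def vanishes_on_Sep_def)
  have "commutant A \<sigma> = S"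
    by (simp add: S_eq commutant_eq)
  moreover have "cp_subalgebra A \<sigma> S"
    unfolding S_eq using assms(1-4) by (rule cp_subalgebra_vanishing_on_Sep)
  moreover have "embed ` A \<subseteq> S"
    using assms(2) by (auto simp: S_eq embed_in_crossed vanishes_on_Sep_embed)
  moreover have "cp_commutative \<sigma> S"
    by (auto simp: S_eq cp_commutative_def intro: cp_mult_commute)
  moreover have "B \<subseteq> S" if "cp_subalgebra A \<sigma> B" "embed ` A \<subseteq> B" "cp_commutative \<sigma> B" for B
    using cp_commutative_subset_commutant[OF that] \<open>commutant A \<sigma> = S\<close> by simp
  ultimately show ?thesis
    by blast
qed

end
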